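(* Let $1\le k<n$ be integers and $K=\{p\in[0,1]^n:\sum_i p_i=k\}$. For $U\subseteq[n]$ with $|U|=k$ define $$g_U(x)=\frac{1}{n-k}\Big(\prod_{i\in U}x_i\Big)\Big(\prod_{i\notin U}(1-x_i)\Big)\Big(\sum_{i\notin U}x_i\Big),\qquad f_U(x)=\frac{g_U(x)}{\sum_{V\subseteq[n],|V|=k}g_V(x)},$$ and let $e_V\in\{0,1\}^n$ denote the indicator vector of $V$. Define $\overline f_U:K\to[0,1]$ by $\overline f_U(x)=f_U(x)$ if $x\in K$ is not of the form $e_V$ for any $V$ with $|V|=k$, $\overline f_U(e_U)=1$, and $\overline f_U(e_V)=0$ for $|V|=k$, $V\neq U$. Then $\overline f_U$ is well defined (i.e. the denominator of $f_U$ is nonzero at every point of $K$ not of the form $e_V$) and is continuous on all of $K$. *)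

theory Defs
  imports "HOL-Analysis.Analysis"
begin

text \<open>The ground set [n] is the finite index type 'n, with n = CARD('n).\<close>

definition Kset :: "nat \<Rightarrow> (real^'n) set" where
  "Kset k = {p. (\<forall>i. 0 \<le> p$i \<and> p$i \<le> 1) \<and> (\<Sum>i\<in>UNIV. p$i) = real k}"

definition gU :: "nat \<Rightarrow> 'n set \<Rightarrow> real^'n \<Rightarrow> real" where
  "gU k U x = (1 / real (CARD('n) - k)) * (\<Prod>i\<in>U. x$i) * (\<Prod>i\<in>- U. 1 - x$i)
      * (\<Sum>i\<in>- U. x$i)"

definition gsum :: "nat \<Rightarrow> real^'n \<Rightarrow> real" where
  "gsum k x = (\<Sum>V\<in>{V :: 'n set. card V = k}. gU k V x)"

definition fU :: "nat \<Rightarrow> 'n set \<Rightarrow> real^'n \<Rightarrow> real" where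
  "fU k U x = gU k U x / gsum k x"

definition ind_vec :: "'n set \<Rightarrow> real^'n" where
  "ind_vec V = (\<chi> i. if i \<in> V then 1 else 0)"

definition fbar :: "nat \<Rightarrow> 'n set \<Rightarrow> real^'n \<Rightarrow> real" where
  "fbar k U x = (if \<exists>V. card V = k \<and> x = ind_vec V
                 then (if x = ind_vec U then 1 else 0)
                 else fU k U x)"

end

theory Submission
  imports Defs
begin

text \<open>
  Away from the vertices \<open>e\<^sub>V\<close> of \<open>K\<close> some \<open>g\<^sub>V\<close> is positive: put into \<open>V\<close> all coordinates
  equal to 1 and then further positive coordinates until \<open>|V| = k\<close>; as \<open>x\<close> is not a vertex, a
  positive coordinate is left outside \<open>V\<close>. At a vertex \<open>e\<^sub>W\<close>, let \<open>s = \<Sum>\<^sub>i\<^sub>\<notin>\<^sub>W x\<^sub>i\<close>, which on \<open>K\<close>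
  equals \<open>\<Sum>\<^sub>i\<^sub>\<in>\<^sub>W (1 - x\<^sub>i)\<close>. Every \<open>g\<^sub>V\<close> with \<open>V \<noteq> W\<close> contains a factor \<open>x\<^sub>j\<close> with \<open>j \<notin> W\<close> and a
  factor \<open>1 - x\<^sub>l\<close> with \<open>l \<in> W\<close>, so it is \<open>O(s\<^sup>2)\<close>, whereas by the Weierstrass product inequality
  \<open>g\<^sub>W \<ge> (1 - s)\<^sup>2 s / (n - k)\<close>.
\<close>

lemma prod_le_factor:
  fixes a :: "'a \<Rightarrow> 'b::linordered_semidom"
  assumes "finite A" "j \<in> A" "\<And>i. i \<in> A \<Longrightarrow> 0 \<le> a i \<and> a i \<le> 1"
  shows "prod a A \<le> a j"
proof -
  have "prod a A = a j * prod a (A - {j})"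
    using assms(1,2) by (simp add: prod.remove)
  also have "\<dots> \<le> a j * 1"
    using assms by (intro mult_left_mono prod_le_1) auto
  finally show ?thesis by simp
qed

lemma obtain_subset_between_with_card:
  assumes "finite B" "A \<subseteq> B" "card A \<le> k" "k \<le> card B"
  obtains V where "A \<subseteq> V" "V \<subseteq> B" "card V = k"
proof -
  have "k - card A \<le> card (B - A)"
    using assms by (simp add: card_Diff_subset finite_subset)
  then obtain T where T: "T \<subseteq> B - A" "card T = k - card A"
    by (metis obtain_subset_with_card_n)
  have "card (A \<union> T) = k"
    using assms T by (subst card_Un_disjoint) (auto intro: finite_subset)
  then show ?thesis
    using that T assms(2) by blast
qed

lemma normalized_weight_deviation:
  fixes a :: "'a \<Rightarrow> real"
  assumes "finite I" "U \<in> I" "W \<in> I" "\<And>V. V \<in> I \<Longrightarrow> 0 \<le> a V" "0 < sum a I"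
    and "0 \<le> B" "sum a (I - {W}) \<le> B * a W"
  shows "\<bar>a U / sum a I - (if U = W then 1 else 0)\<bar> \<le> B"
proof -
  have split: "sum a I = a W + sum a (I - {W})"
    using assms(1,3) by (simp add: sum.remove)
  have rest_nonneg: "0 \<le> sum a (I - {W})"
    using assms(4) by (intro sum_nonneg) auto
  have "\<bar>a U / sum a I - (if U = W then 1 else 0)\<bar> \<le> sum a (I - {W}) / sum a I"
  proof (cases "U = W")
    case True
    then show ?thesis
      using rest_nonneg assms(5) split by (simp add: field_simps)
  next
    case False
    then have "a U \<le> sum a (I - {W})"
      using assms(1,2,4) by (intro member_le_sum) auto
    then show ?thesis
      using False assms(2,4,5) by (simp add: divide_right_mono)
  qed
  also have "\<dots> \<le> B * a W / sum a I"
    using assms(5,7) by (simp add: divide_right_mono)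
  also have "\<dots> \<le> B * sum a I / sum a I"
    using split rest_nonneg assms(5,6) by (intro divide_right_mono mult_left_mono) auto
  also have "\<dots> = B"
    using assms(5) by simp
  finally show ?thesis .
qed

lemma eventually_at_within_notin_finite:
  fixes x :: "'a::t1_space"
  assumes "finite F"
  shows "\<forall>\<^sub>F y in at x within S. y \<notin> F"
proof -
  have "open (- (F - {x}))"
    using assms by (intro open_Compl finite_imp_closed) simp
  then have "\<forall>\<^sub>F y in nhds x. y \<in> - (F - {x})"
    by (intro eventually_nhds_in_open) auto
  then show ?thesis
    unfolding eventually_at_filter by (auto elim: eventually_mono)
qed

definition vertices :: "nat \<Rightarrow> (real^'n) set" where
  "vertices k = ind_vec ` {V. card V = k}"

lemma finite_vertices: "finite (vertices k)"
  unfolding vertices_def by simp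

lemma ind_vec_eq_iff: "ind_vec V = ind_vec W \<longleftrightarrow> V = W"
  unfolding ind_vec_def by (auto simp: vec_eq_iff split: if_splits)

lemma fbar_ind_vec:
  assumes "card W = k"
  shows "fbar k U (ind_vec W) = (if U = W then 1 else 0)"
  using assms by (auto simp: fbar_def ind_vec_eq_iff)

lemma fbar_eq_fU: "x \<notin> vertices k \<Longrightarrow> fbar k U x = fU k U x"
  unfolding fbar_def vertices_def by auto

lemma Kset_bounds: "x \<in> Kset k \<Longrightarrow> 0 \<le> x$i \<and> x$i \<le> 1"
  unfolding Kset_def by auto

lemma Kset_sum_one_minus_eq_sum_compl:
  assumes "y \<in> Kset k" "card W = k"
  shows "(\<Sum>i\<in>W. 1 - y$i) = (\<Sum>i\<in>-W. y$i)"
proof -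
  have "(\<Sum>i\<in>W. y$i) + (\<Sum>i\<in>-W. y$i) = real k"
    using assms(1) sum.union_disjoint[of W "-W" "\<lambda>i. y$i"] unfolding Kset_def
    by (simp add: Un_commute)
  then show ?thesis
    using assms(2) by (simp add: sum_subtractf)
qed

lemma gU_nonneg: "x \<in> Kset k \<Longrightarrow> 0 \<le> gU k V x"
  unfolding gU_def using Kset_bounds
  by (auto intro!: divide_nonneg_nonneg mult_nonneg_nonneg prod_nonneg sum_nonneg)

lemma gU_le_gsum: "x \<in> Kset k \<Longrightarrow> card V = k \<Longrightarrow> gU k V x \<le> gsum k x"
  unfolding gsum_def using gU_nonneg by (intro member_le_sum) auto

lemma gU_pos:
  assumes "k < CARD('n)" "x \<in> Kset k" "\<And>i. i \<in> V \<Longrightarrow> 0 < x$i"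
    and "\<And>i. i \<notin> V \<Longrightarrow> x$i < 1" "j \<notin> V" "0 < x$j"
  shows "0 < gU k V (x :: real^'n)"
  unfolding gU_def
proof (intro mult_pos_pos prod_pos)
  show "0 < (\<Sum>i\<in>-V. x$i)"
    using assms(2,5,6) Kset_bounds by (intro sum_pos2[of _ j]) auto
qed (use assms in auto)

lemma Kset_non_vertex_card_bounds:
  assumes "x \<in> Kset k" "x \<notin> vertices k"
  shows "card {i. x$i = 1} < k" "k < card {i. 0 < x$i}"
proof -
  define A where "A = {i. x$i = 1}"
  define B where "B = {i. 0 < x$i}"
  have "A \<subseteq> B" unfolding A_def B_def by auto
  have "real k = (\<Sum>i\<in>UNIV. x$i)"
    using assms(1) by (simp add: Kset_def)
  also have "\<dots> = (\<Sum>i\<in>B. x$i)"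
  proof (rule sum.mono_neutral_right)
    show "\<forall>i\<in>UNIV - B. x$i = 0"
      using Kset_bounds[OF assms(1)] by (auto simp: B_def intro: order_antisym)
  qed auto
  also have "\<dots> = (\<Sum>i\<in>B - A. x$i) + (\<Sum>i\<in>A. x$i)"
    using \<open>A \<subseteq> B\<close> by (intro sum.subset_diff) auto
  also have "(\<Sum>i\<in>A. x$i) = real (card A)"
    by (simp add: A_def)
  finally have k_eq: "real k = (\<Sum>i\<in>B - A. x$i) + real (card A)" .
  have "B - A \<noteq> {}"
  proof
    assume "B - A = {}"
    have "x$i = (if i \<in> A then 1 else 0)" for i
      using \<open>B - A = {}\<close> Kset_bounds[OF assms(1), of i]
      by (cases "i \<in> B") (auto simp: A_def B_def)
    then have "x = ind_vec A"
      by (simp add: vec_eq_iff ind_vec_def)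
    moreover have "card A = k"
      using k_eq \<open>B - A = {}\<close> by simp
    ultimately show False
      using assms(2) by (auto simp: vertices_def)
  qed
  have fractional: "0 < x$i \<and> x$i < 1" if "i \<in> B - A" for i
    using that Kset_bounds[OF assms(1), of i] by (auto simp: A_def B_def)
  have "0 < (\<Sum>i\<in>B - A. x$i)"
    using \<open>B - A \<noteq> {}\<close> fractional by (intro sum_pos) auto
  then show "card A < k"
    using k_eq by linarith
  have "(\<Sum>i\<in>B - A. x$i) < (\<Sum>i\<in>B - A. 1)"
    using \<open>B - A \<noteq> {}\<close> fractional by (intro sum_strict_mono) auto
  moreover have "card (B - A) + card A = card B"
    using \<open>A \<subseteq> B\<close> by (simp add: card_Diff_subset card_mono)
  ultimately show "k < card B"
    using k_eq by (simp flip: of_nat_add)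
qed

lemma gsum_pos:
  fixes x :: "real^'n"
  assumes "k < CARD('n)" "x \<in> Kset k" "x \<notin> vertices k"
  shows "0 < gsum k x"
proof -
  define A where "A = {i. x$i = 1}"
  define B where "B = {i. 0 < x$i}"
  have "A \<subseteq> B" unfolding A_def B_def by auto
  obtain V where V: "A \<subseteq> V" "V \<subseteq> B" "card V = k"
    using obtain_subset_between_with_card[of B A k] \<open>A \<subseteq> B\<close>
      Kset_non_vertex_card_bounds[OF assms(2,3)] unfolding A_def B_def
    by (metis finite less_imp_le)
  have "\<not> B \<subseteq> V"
    using card_mono[of V B] V(3) Kset_non_vertex_card_bounds(2)[OF assms(2,3)]
    unfolding B_def by auto
  then obtain j where "j \<in> B" "j \<notin> V" by blast
  have "0 < gU k V x"
  proof (rule gU_pos[OF assms(1,2) _ _ \<open>j \<notin> V\<close>])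
    show "0 < x$i" if "i \<in> V" for i
      using that V(2) by (auto simp: B_def)
    show "x$i < 1" if "i \<notin> V" for i
      using that V(1) Kset_bounds[OF assms(2), of i] by (auto simp: A_def less_le)
  qed (use \<open>j \<in> B\<close> B_def in auto)
  also have "\<dots> \<le> gsum k x"
    using gU_le_gsum assms(2) V(3) by blast
  finally show ?thesis .
qed

lemma fbar_in_unit_interval:
  assumes "k < CARD('n)" "card U = k" "x \<in> Kset k"
  shows "fbar k U (x :: real^'n) \<in> {0..1}"
proof (cases "x \<in> vertices k")
  case True
  then show ?thesis
    by (auto simp: fbar_def vertices_def)
next
  case False
  then show ?thesis
    using gsum_pos[OF assms(1,3) False] gU_nonneg[OF assms(3)] gU_le_gsum[OF assms(3,2)]
    by (simp add: fbar_eq_fU fU_def divide_le_eq)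
qed

lemma gU_le_at_other_vertex:
  fixes y :: "real^'n"
  assumes "y \<in> Kset k" "card V = k" "card W = k" "V \<noteq> W"
  defines "s \<equiv> \<Sum>i\<in>-W. y$i"
  shows "gU k V y \<le> real CARD('n) / real (CARD('n) - k) * s\<^sup>2"
proof -
  obtain j where "j \<in> V" "j \<notin> W"
    using card_subset_eq[of W V] assms(2-4) by auto
  obtain l where "l \<in> W" "l \<notin> V"
    using card_subset_eq[of V W] assms(2-4) by auto
  note bounds = Kset_bounds[OF assms(1)]
  have "0 \<le> s"
    unfolding s_def using bounds by (intro sum_nonneg) auto
  have "(\<Prod>i\<in>V. y$i) \<le> y$j"
    using \<open>j \<in> V\<close> bounds by (intro prod_le_factor) auto
  also have "\<dots> \<le> s"
    unfolding s_def using \<open>j \<notin> W\<close> bounds by (intro member_le_sum) auto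
  finally have in_V: "(\<Prod>i\<in>V. y$i) \<le> s" .
  have "(\<Prod>i\<in>-V. 1 - y$i) \<le> 1 - y$l"
    using \<open>l \<notin> V\<close> bounds by (intro prod_le_factor[where a = "\<lambda>i. 1 - y$i"]) auto
  also have "\<dots> \<le> (\<Sum>i\<in>W. 1 - y$i)"
    using \<open>l \<in> W\<close> bounds by (intro member_le_sum) auto
  also have "\<dots> = s"
    unfolding s_def using assms(1,3) by (rule Kset_sum_one_minus_eq_sum_compl)
  finally have off_V: "(\<Prod>i\<in>-V. 1 - y$i) \<le> s" .
  have "(\<Sum>i\<in>-V. y$i) \<le> (\<Sum>i\<in>UNIV. y$i)"
    using bounds by (intro sum_mono2) auto
  also have "\<dots> \<le> real CARD('n)"
    using sum_mono[of UNIV "\<lambda>i. y$i" "\<lambda>_. 1"] bounds by simp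
  finally have "(\<Prod>i\<in>V. y$i) * (\<Prod>i\<in>-V. 1 - y$i) * (\<Sum>i\<in>-V. y$i) \<le> s * s * real CARD('n)"
    using in_V off_V \<open>0 \<le> s\<close> bounds by (intro mult_mono mult_nonneg_nonneg prod_nonneg sum_nonneg) auto
  then show ?thesis
    unfolding gU_def by (simp add: divide_right_mono power2_eq_square mult_ac)
qed

lemma gU_ge_near_vertex:
  fixes y :: "real^'n"
  assumes "y \<in> Kset k" "card W = k"
  defines "s \<equiv> \<Sum>i\<in>-W. y$i"
  assumes "s \<le> 1"
  shows "(1 - s)\<^sup>2 * s / real (CARD('n) - k) \<le> gU k W y"
proof -
  note bounds = Kset_bounds[OF assms(1)]
  have "1 - s \<le> (\<Prod>i\<in>W. y$i)"
    using Weierstrass_prod_ineq[of W "\<lambda>i. 1 - y$i"] bounds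
      Kset_sum_one_minus_eq_sum_compl[OF assms(1,2)] by (simp add: s_def)
  moreover have "1 - s \<le> (\<Prod>i\<in>-W. 1 - y$i)"
    using Weierstrass_prod_ineq[of "-W" "\<lambda>i. y$i"] bounds by (simp add: s_def)
  ultimately have "(1 - s) * (1 - s) * s \<le> (\<Prod>i\<in>W. y$i) * (\<Prod>i\<in>-W. 1 - y$i) * s"
    using \<open>s \<le> 1\<close> bounds by (intro mult_mono mult_right_mono) (auto simp: s_def intro: sum_nonneg)
  then show ?thesis
    unfolding gU_def s_def by (simp add: divide_right_mono power2_eq_square mult_ac)
qed

lemma sum_gU_other_vertices_le:
  fixes y :: "real^'n"
  assumes "y \<in> Kset k" "card W = k"
  defines "s \<equiv> \<Sum>i\<in>-W. y$i"
  assumes "s < 1"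
  shows "(\<Sum>V\<in>{V. card V = k} - {W}. gU k V y)
    \<le> real (card {V::'n set. card V = k}) * real CARD('n) * s / (1 - s)\<^sup>2 * gU k W y"
proof -
  define N where "N = real (card {V::'n set. card V = k})"
  define c where "c = 1 / real (CARD('n) - k)"
  have "0 \<le> s"
    unfolding s_def using Kset_bounds[OF assms(1)] by (intro sum_nonneg) auto
  have "(\<Sum>V\<in>{V. card V = k} - {W}. gU k V y) \<le> (\<Sum>V\<in>{V. card V = k} - {W}. real CARD('n) * c * s\<^sup>2)"
    using gU_le_at_other_vertex[OF assms(1) _ assms(2)] by (intro sum_mono) (auto simp: s_def c_def)
  also have "\<dots> \<le> N * (real CARD('n) * c * s\<^sup>2)"
    unfolding sum_constant N_def c_def by (intro mult_right_mono) (simp_all add: card_Diff1_le)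
  also have "\<dots> = N * real CARD('n) * s / (1 - s)\<^sup>2 * ((1 - s)\<^sup>2 * s * c)"
    using \<open>s < 1\<close> by (simp add: power2_eq_square[of s])
  also have "\<dots> \<le> N * real CARD('n) * s / (1 - s)\<^sup>2 * gU k W y"
    using gU_ge_near_vertex[OF assms(1,2)] \<open>0 \<le> s\<close> \<open>s < 1\<close>
    by (intro mult_left_mono) (auto simp: s_def c_def N_def)
  finally show ?thesis
    unfolding N_def .
qed

lemma fU_near_vertex:
  fixes y :: "real^'n"
  assumes "k < CARD('n)" "y \<in> Kset k" "y \<notin> vertices k" "card U = k" "card W = k"
  defines "s \<equiv> \<Sum>i\<in>-W. y$i"
  assumes "s < 1"
  shows "\<bar>fU k U y - (if U = W then 1 else 0)\<bar>
    \<le> real (card {V::'n set. card V = k}) * real CARD('n) * s / (1 - s)\<^sup>2"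
proof -
  have "0 \<le> s"
    unfolding s_def using Kset_bounds[OF assms(2)] by (intro sum_nonneg) auto
  have "gsum k y = (\<Sum>V\<in>{V. card V = k}. gU k V y)"
    by (simp add: gsum_def)
  then show ?thesis
    unfolding fU_def
    using normalized_weight_deviation[where a = "\<lambda>V. gU k V y"] \<open>0 \<le> s\<close> assms
      gsum_pos[OF assms(1-3)] gU_nonneg[OF assms(2)] sum_gU_other_vertices_le[OF assms(2,5)]
    by (simp add: s_def)
qed

lemma continuous_fbar_at_non_vertex:
  assumes "k < CARD('n)" "x \<in> Kset k" "x \<notin> vertices k"
  shows "continuous (at x within Kset k) (fbar k U :: real^'n \<Rightarrow> real)"
proof -
  have "isCont (\<lambda>y. gU k U y / gsum k y) x"
    using gsum_pos[OF assms] unfolding gU_def gsum_def by (intro continuous_intros) auto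
  then have "continuous (at x within Kset k) (fU k U)"
    unfolding fU_def[abs_def] by (rule continuous_at_imp_continuous_within)
  then have "(fU k U \<longlongrightarrow> fU k U x) (at x within Kset k)"
    by (simp add: continuous_within)
  moreover have "\<forall>\<^sub>F y in at x within Kset k. fU k U y = fbar k U y"
    using eventually_at_within_notin_finite[OF finite_vertices[of k]]
    by (rule eventually_mono) (simp add: fbar_eq_fU)
  ultimately show ?thesis
    unfolding continuous_within fbar_eq_fU[OF assms(3)] by (rule Lim_transform_eventually)
qed

lemma continuous_fbar_at_vertex:
  assumes "k < CARD('n)" "card U = k" "card W = k"
  shows "continuous (at (ind_vec W) within Kset k) (fbar k U :: real^'n \<Rightarrow> real)"
proof -
  define s where "s y = (\<Sum>i\<in>-W. y$i)" for y :: "real^'n"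
  define N where "N = real (card {V::'n set. card V = k}) * real CARD('n)"
  let ?F = "at (ind_vec W) within Kset k"
  have "(s \<longlongrightarrow> s (ind_vec W)) ?F"
    unfolding s_def by (intro tendsto_intros)
  then have s_lim: "(s \<longlongrightarrow> 0) ?F"
    by (simp add: s_def ind_vec_def)
  have "((\<lambda>y. N * s y / (1 - s y)\<^sup>2) \<longlongrightarrow> N * 0 / (1 - 0)\<^sup>2) ?F"
    by (intro tendsto_intros s_lim) simp
  then have bound_lim: "((\<lambda>y. N * s y / (1 - s y)\<^sup>2) \<longlongrightarrow> 0) ?F"
    by simp
  have "\<forall>\<^sub>F y in ?F. y \<in> Kset k"
    by (simp add: eventually_at_filter)
  then have "\<forall>\<^sub>F y in ?F. norm (fbar k U y - (if U = W then 1 else 0)) \<le> N * s y / (1 - s y)\<^sup>2"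
    using order_tendstoD(2)[OF s_lim zero_less_one]
      eventually_at_within_notin_finite[OF finite_vertices[of k], where x = "ind_vec W" and S = "Kset k"]
  proof eventually_elim
    case (elim y)
    then show ?case
      using fU_near_vertex[OF assms(1) _ _ assms(2,3)] by (simp add: fbar_eq_fU N_def s_def)
  qed
  then have "((\<lambda>y. fbar k U y - (if U = W then 1 else 0)) \<longlongrightarrow> 0) ?F"
    using bound_lim by (rule Lim_null_comparison)
  then show ?thesis
    unfolding continuous_within fbar_ind_vec[OF assms(3)] by (rule LIM_zero_cancel)
qed

theorem lemma9:
  fixes k :: nat and U :: "'n::finite set"
  assumes "1 \<le> k" and "k < CARD('n)" and "card U = k"
  shows "(\<forall>x\<in>Kset k. (\<nexists>V::'n set. card V = k \<and> x = ind_vec V) \<longrightarrow> gsum k x \<noteq> 0)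
       \<and> fbar k U ` Kset k \<subseteq> {0..1}
       \<and> continuous_on (Kset k) (fbar k U)"
proof (intro conjI)
  show "\<forall>x\<in>Kset k. (\<nexists>V::'n set. card V = k \<and> x = ind_vec V) \<longrightarrow> gsum k x \<noteq> 0"
    using gsum_pos[OF assms(2)] by (force simp: vertices_def)
  show "fbar k U ` Kset k \<subseteq> {0..1}"
    using fbar_in_unit_interval[OF assms(2,3)] by blast
  show "continuous_on (Kset k) (fbar k U)"
    unfolding continuous_on_eq_continuous_within
  proof
    fix x :: "real^'n"
    assume "x \<in> Kset k"
    show "continuous (at x within Kset k) (fbar k U)"
    proof (cases "x \<in> vertices k")
      case True
      then show ?thesis
        using continuous_fbar_at_vertex[OF assms(2,3)] by (auto simp: vertices_def)
    next
      case False
      then show ?thesis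
        using continuous_fbar_at_non_vertex[OF assms(2) \<open>x \<in> Kset k\<close>] by blast
    qed
  qed
qed

end
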